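(* Consider the modified Ghaffari process described in the context, with marking decisions in each phase that are only pairwise independent. If phase $t$ is a type-2 golden phase for an undecided node $v$, i.e., $d_t(v)>1/4$ and $\sum_{u\in N(v),\, u \text{ light}} p_t(u)\ge d_t(v)/10$, then $v$ is removed in phase $t$ (i.e., $v$ or one of its undecided neighbors joins the independent set) with probability at least $1/160$.
   Context: Let $G=(V,E)$ be an undirected graph. The process runs in phases $t=0,1,2,\dots$ on the graph induced by the undecided nodes (initially all nodes); $N(v)$ denotes the set of undecided neighbors of $v$. Each undecided node $v$ has a value $p_t(v)$, with $p_0(v)=1/4$; its effective degree is $d_t(v)=\sum_{u\in N(v)}p_t(u)$. Then $p_{t+1}(v)=p_t(v)/2$ if $d_t(v)\ge 1/2$, and $p_{t+1}(v)=\min\{2p_t(v),1/4\}$ if $d_t(v)<1/2$. A node $u$ is light in phase $t$ if $d_t(u)<1/4$. In phase $t$, each undecided node $v$ becomes marked with probability $p_t(v)$, where the marking events of the nodes in phase $t$ are pairwise independent (given the state at the start of the phase); a marked node none of whose undecided neighbors is marked joins the independent set, and it and all its neighbors are removed. *)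

theory Defs
  imports "HOL-Probability.Probability_Mass_Function"
begin

text \<open>U is the set of undecided nodes
at the start of the phase, E a symmetric irreflexive adjacency relation,
p the current values p_t, and the marking is a random set of marked nodes.\<close>

definition nbrs :: "('a \<Rightarrow> 'a \<Rightarrow> bool) \<Rightarrow> 'a set \<Rightarrow> 'a \<Rightarrow> 'a set" where
  "nbrs E U v = {u \<in> U. E v u}"

definition eff_deg :: "('a \<Rightarrow> 'a \<Rightarrow> bool) \<Rightarrow> 'a set \<Rightarrow> ('a \<Rightarrow> real) \<Rightarrow> 'a \<Rightarrow> real" where
  "eff_deg E U p v = (\<Sum>u\<in>nbrs E U v. p u)"

definition light :: "('a \<Rightarrow> 'a \<Rightarrow> bool) \<Rightarrow> 'a set \<Rightarrow> ('a \<Rightarrow> real) \<Rightarrow> 'a \<Rightarrow> bool" where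
  "light E U p u \<longleftrightarrow> eff_deg E U p u < 1/4"

definition golden_type2 :: "('a \<Rightarrow> 'a \<Rightarrow> bool) \<Rightarrow> 'a set \<Rightarrow> ('a \<Rightarrow> real) \<Rightarrow> 'a \<Rightarrow> bool" where
  "golden_type2 E U p v \<longleftrightarrow>
     eff_deg E U p v > 1/4 \<and>
     (\<Sum>u\<in>{u \<in> nbrs E U v. light E U p u}. p u) \<ge> eff_deg E U p v / 10"

definition pairwise_indep_marking :: "'a set \<Rightarrow> ('a \<Rightarrow> real) \<Rightarrow> 'a set pmf \<Rightarrow> bool" where
  "pairwise_indep_marking U p M \<longleftrightarrow>
     set_pmf M \<subseteq> Pow U \<and>
     (\<forall>u\<in>U. measure_pmf.prob M {S. u \<in> S} = p u) \<and>
     (\<forall>u\<in>U. \<forall>w\<in>U. u \<noteq> w \<longrightarrow> measure_pmf.prob M {S. u \<in> S \<and> w \<in> S} = p u * p w)"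

definition joins :: "('a \<Rightarrow> 'a \<Rightarrow> bool) \<Rightarrow> 'a set \<Rightarrow> 'a set \<Rightarrow> 'a \<Rightarrow> bool" where
  "joins E U S w \<longleftrightarrow> w \<in> S \<and> (\<forall>u\<in>nbrs E U w. u \<notin> S)"

definition removed :: "('a \<Rightarrow> 'a \<Rightarrow> bool) \<Rightarrow> 'a set \<Rightarrow> 'a set \<Rightarrow> 'a \<Rightarrow> bool" where
  "removed E U S v \<longleftrightarrow> (\<exists>w\<in>insert v (nbrs E U v). joins E U S w)"

end

theory Submission
  imports Defs
begin

text \<open>A marked light neighbour u of v fails to join only if one of its neighbours is marked
  too, so by a union bound and pairwise independence u joins with probability at least
  p(u) (1 - d(u)) \<ge> 3/4 p(u). Since the light neighbours carry weight \<ge> d(v)/10 > 1/40 and every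
  p(u) \<le> 1/4, some set B of them has 1/40 \<le> p(B) \<le> 11/40. The second Bonferroni inequality,
  again with pairwise independence, shows that some node of B joins with probability at least
  3/4 p(B) - p(B)^2 \<ge> 1/160.\<close>

context finite_measure
begin

lemma measure_UN_ge_sum_measure_minus_sum_sq:
  fixes A :: "'i \<Rightarrow> 'a set" and q :: "'i \<Rightarrow> real"
  assumes "finite I" "A ` I \<subseteq> sets M" "\<And>i. i \<in> I \<Longrightarrow> 0 \<le> q i"
    and "\<And>i j. i \<in> I \<Longrightarrow> j \<in> I \<Longrightarrow> i \<noteq> j \<Longrightarrow> measure M (A i \<inter> A j) \<le> q i * q j"
  shows "measure M (\<Union>i\<in>I. A i) \<ge> (\<Sum>i\<in>I. measure M (A i)) - (\<Sum>i\<in>I. q i)\<^sup>2"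
  using assms
proof (induction I rule: finite_induct)
  case empty
  then show ?case by simp
next
  case (insert i I)
  let ?B = "\<Union>j\<in>I. A j"
  have sets: "A i \<in> sets M" "?B \<in> sets M"
    using insert.hyps(1) insert.prems(1) by (auto intro: sets.finite_UN)
  have "measure M (A i \<inter> ?B) = measure M (\<Union>j\<in>I. A i \<inter> A j)"
    by (simp only: Int_UN_distrib)
  also have "\<dots> \<le> (\<Sum>j\<in>I. measure M (A i \<inter> A j))"
    using insert.hyps(1) insert.prems(1) by (intro finite_measure_subadditive_finite) auto
  also have "\<dots> \<le> (\<Sum>j\<in>I. q i * q j)"
    using insert.hyps(2) insert.prems(3) by (intro sum_mono) auto
  also have "\<dots> = q i * sum q I"
    by (simp only: sum_distrib_left)
  finally have overlap: "measure M (A i \<inter> ?B) \<le> q i * sum q I" .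
  have IH: "measure M ?B \<ge> (\<Sum>j\<in>I. measure M (A j)) - (sum q I)\<^sup>2"
    by (rule insert.IH) (use insert.prems in auto)
  have square: "q i * sum q I + (sum q I)\<^sup>2 \<le> (q i + sum q I)\<^sup>2"
    using insert.prems(2) sum_nonneg[of I q] by (simp add: power2_eq_square algebra_simps)
  have "measure M (A i \<union> ?B) = measure M (A i) + measure M ?B - measure M (A i \<inter> ?B)"
    using sets by (simp add: measure_Un3 fmeasurable_eq_sets)
  moreover have "sum q (insert i I) = q i + sum q I"
    "(\<Sum>j\<in>insert i I. measure M (A j)) = measure M (A i) + (\<Sum>j\<in>I. measure M (A j))"
    using insert.hyps by simp_all
  ultimately show ?case
    using overlap IH square by simp
qed

end

lemma exists_subset_sum_between:
  fixes f :: "'a \<Rightarrow> real"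
  assumes "finite A" "\<And>x. x \<in> A \<Longrightarrow> 0 \<le> f x \<and> f x \<le> c" "0 < a" "a \<le> sum f A"
  shows "\<exists>B\<subseteq>A. a \<le> sum f B \<and> sum f B \<le> a + c"
  using assms
proof (induction A rule: finite_induct)
  case empty
  then show ?case by auto
next
  case (insert x A)
  show ?case
  proof (cases "sum f (insert x A) \<le> a + c")
    case True
    then show ?thesis using insert.prems(3) by blast
  next
    case False
    moreover have "f x \<le> c"
      using insert.prems(1) by blast
    ultimately have "a \<le> sum f A"
      using insert.hyps by simp
    then obtain B where "B \<subseteq> A" "a \<le> sum f B \<and> sum f B \<le> a + c"
      using insert.IH insert.prems by auto
    then show ?thesis by blast
  qed
qed

lemma prob_joins_ge:
  assumes "finite U" "\<And>x. \<not> E x x" "pairwise_indep_marking U p M" "u \<in> U"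
  shows "measure_pmf.prob M {S. joins E U S u} \<ge> p u * (1 - eff_deg E U p u)"
proof -
  note marking = assms(3)[unfolded pairwise_indep_marking_def]
  let ?N = "nbrs E U u"
  have u_notin_N: "u \<notin> ?N"
    using assms(2) by (simp add: nbrs_def)
  have "p u = measure_pmf.prob M {S. u \<in> S}"
    using marking assms(4) by auto
  also have "\<dots> \<le> measure_pmf.prob M ({S. joins E U S u} \<union> (\<Union>w\<in>?N. {S. u \<in> S \<and> w \<in> S}))"
    by (intro measure_pmf.finite_measure_mono) (auto simp: joins_def)
  also have "\<dots> \<le> measure_pmf.prob M {S. joins E U S u} + measure_pmf.prob M (\<Union>w\<in>?N. {S. u \<in> S \<and> w \<in> S})"
    by (rule measure_Un_le) simp_all
  also have "\<dots> \<le> measure_pmf.prob M {S. joins E U S u} + (\<Sum>w\<in>?N. measure_pmf.prob M {S. u \<in> S \<and> w \<in> S})"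
    using assms(1) by (intro add_left_mono measure_pmf.finite_measure_subadditive_finite) (auto simp: nbrs_def)
  also have "\<dots> = measure_pmf.prob M {S. joins E U S u} + (\<Sum>w\<in>?N. p u * p w)"
    using marking assms(4) u_notin_N by (intro arg_cong2[where f = "(+)"] sum.cong) (auto simp: nbrs_def)
  finally show ?thesis
    by (simp add: eff_deg_def sum_distrib_left algebra_simps)
qed

lemma prob_joins_both_le:
  assumes "pairwise_indep_marking U p M" "u \<in> U" "w \<in> U" "u \<noteq> w"
  shows "measure_pmf.prob M ({S. joins E U S u} \<inter> {S. joins E U S w}) \<le> p u * p w"
proof -
  have "measure_pmf.prob M ({S. joins E U S u} \<inter> {S. joins E U S w})
      \<le> measure_pmf.prob M {S. u \<in> S \<and> w \<in> S}"
    by (intro measure_pmf.finite_measure_mono) (auto simp: joins_def)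
  also have "\<dots> = p u * p w"
    using assms unfolding pairwise_indep_marking_def by auto
  finally show ?thesis .
qed

lemma prob_removed_ge_light_nbrs:
  assumes "finite U" "\<And>x. \<not> E x x" "\<And>u. u \<in> U \<Longrightarrow> 0 \<le> p u"
    and "pairwise_indep_marking U p M"
    and "B \<subseteq> {u \<in> nbrs E U v. light E U p u}"
  shows "measure_pmf.prob M {S. removed E U S v} \<ge> 3/4 * sum p B - (sum p B)\<^sup>2"
proof -
  have BU: "B \<subseteq> U"
    using assms(5) by (auto simp: nbrs_def)
  then have finB: "finite B"
    using assms(1) finite_subset by blast
  let ?J = "\<lambda>u. {S. joins E U S u}"
  have "3/4 * sum p B = (\<Sum>u\<in>B. 3/4 * p u)"
    by (simp add: sum_distrib_left)
  also have "\<dots> \<le> (\<Sum>u\<in>B. p u * (1 - eff_deg E U p u))"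
  proof (rule sum_mono)
    fix u assume "u \<in> B"
    then have "0 \<le> p u" "eff_deg E U p u < 1/4"
      using assms(3,5) BU by (auto simp: light_def)
    then have "p u * eff_deg E U p u \<le> p u * (1/4)"
      by (intro mult_left_mono) auto
    then show "3/4 * p u \<le> p u * (1 - eff_deg E U p u)"
      by (simp add: algebra_simps)
  qed
  also have "\<dots> \<le> (\<Sum>u\<in>B. measure_pmf.prob M (?J u))"
    using assms(1,2,4) BU by (intro sum_mono prob_joins_ge) auto
  also have "\<dots> - (sum p B)\<^sup>2 \<le> measure_pmf.prob M (\<Union>u\<in>B. ?J u)"
    using finB BU assms(3)
    by (intro measure_pmf.measure_UN_ge_sum_measure_minus_sum_sq) (auto intro: prob_joins_both_le[OF assms(4)])
  also have "\<dots> \<le> measure_pmf.prob M {S. removed E U S v}"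
    using assms(5) by (intro measure_pmf.finite_measure_mono) (auto simp: removed_def)
  finally show ?thesis by simp
qed

theorem lemma4:
  fixes E :: "'a \<Rightarrow> 'a \<Rightarrow> bool" and U :: "'a set" and p :: "'a \<Rightarrow> real"
    and M :: "'a set pmf" and v :: 'a
  assumes "finite U"
    and "\<And>x y. E x y \<Longrightarrow> E y x"
    and "\<And>x. \<not> E x x"
    and "v \<in> U"
    and "\<And>u. u \<in> U \<Longrightarrow> 0 < p u \<and> p u \<le> 1/4"
    and "pairwise_indep_marking U p M"
    and "golden_type2 E U p v"
  shows "measure_pmf.prob M {S. removed E U S v} \<ge> 1/160"
proof -
  define L where "L = {u \<in> nbrs E U v. light E U p u}"
  have "finite L" "L \<subseteq> U"
    using assms(1) by (auto simp: L_def nbrs_def)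
  moreover have "1/40 \<le> sum p L"
    using assms(7) by (simp add: golden_type2_def L_def)
  moreover have "\<And>u. u \<in> L \<Longrightarrow> 0 \<le> p u \<and> p u \<le> 1/4"
    using assms(5) \<open>L \<subseteq> U\<close> by fastforce
  ultimately obtain B where B: "B \<subseteq> L" "1/40 \<le> sum p B" "sum p B \<le> 1/40 + 1/4"
    using exists_subset_sum_between[of L p "1/4" "1/40"] by auto
  have "1/160 \<le> sum p B * (3/4 - sum p B)"
    using mult_mono[of "1/40" "sum p B" "3/4 - (1/40 + 1/4)" "3/4 - sum p B"] B by simp
  also have "\<dots> = 3/4 * sum p B - (sum p B)\<^sup>2"
    by (simp add: power2_eq_square algebra_simps)
  also have "\<dots> \<le> measure_pmf.prob M {S. removed E U S v}"
    using assms(1,3,5,6) B(1) by (intro prob_removed_ge_light_nbrs) (auto simp: L_def less_imp_le)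
  finally show ?thesis .
qed

end
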